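(* (a) For an integer $k\ge2$, with $P_k$, $Z_k$, $\Lambda_k$, $p_j$ as below, every global trajectory $\gamma$ of $Z_k$ with $\gamma(0)\in\Lambda_k$ has the property that for every $t\in\mathbb{R}$ there exists a unique $t^*\in[t,t+1)$ with $\gamma(t^* )\in\{(p_j,0):j=1,\dots,k-1\}$. (b) Every global trajectory $\gamma$ of $Z_\infty$ with $\gamma(0)\in\Lambda_\infty$ has the property that for every $t\in\mathbb{R}$ there exists a unique $t^*\in[t,t+1)$ with $\gamma(t^* )\in\{(j,0):j\in\mathbb{Z}\}$.
   Context: $P_k(x)=-\left(x+\frac{k-1}{2}\right)\left(x-\frac{k-1}{2}\right)\prod_{i=1}^{k-1}\left(x-\left(i-\frac k2\right)\right)^2$, $r_0=\frac{1-k}{2}$, $r_1=\frac{k-1}{2}$, $p_j=j-\frac k2$; $Z_k=(X_k,Y_k)$ with $X_k(x,y)=(1,P_k'(x))$ on $y\ge0$, $Y_k(x,y)=(-1,P_k'(x))$ on $y\le0$; $\Lambda_k=\{(x,\pm P_k(x)):r_0\le x\le r_1\}$. $Z_\infty$: $X_\infty(x,y)=(1,2\sin(2\pi x))$ on $y\ge0$, $Y_\infty(x,y)=(-1,2\sin(2\pi x))$ on $y\le0$; $\Lambda_\infty=\{(x,\pm P_\infty(x)):x\in\mathbb{R}\}$ with $P_\infty(x)=\frac{1-\cos(2\pi x)}{\pi}$. PSVF conventions: switching manifold $\Sigma=\{y=0\}=f^{-1}(0)$, $f(x,y)=y$; $Wf=\langle\nabla f,W\rangle$, $W^2f=\langle\nabla(Wf),W\rangle$;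 crossing region $\Sigma^c=\{Xf\cdot Yf>0\}$ ($\Sigma^{c\pm}$ according to the common sign), sliding $\Sigma^s=\{Xf<0<Yf\}$, escaping $\Sigma^e=\{Yf<0<Xf\}$, sliding field $Z^T=(Yf\,X-Xf\,Y)/(Yf-Xf)$. Local trajectories (Filippov): off $\Sigma$ follow $X$ or $Y$; through $\Sigma^{c+}$ follow $Y$ for $t\le0$ and $X$ for $t\ge0$ (reversed on $\Sigma^{c-}$); on $\Sigma^e$ follow $Z^T$ for $t\le0$ and one of $X,Y,Z^T$ for $t\ge0$ (reversed on $\Sigma^s$); at a regular tangency (not invisible for both fields) follow one of $X,Y,Z^T$ for $t\le0$ and one for $t\ge0$; singular tangencies are stationary. A global trajectory $\gamma:\mathbb{R}\to\mathbb{R}^2$ is a concatenation of orientation-preserving local trajectories $\sigma_i$ on $[t_i,t_{i+1}]$, $i\in\mathbb{Z}$, with $\sigma_i(t_{i+1})=\sigma_{i+1}(t_{i+1})$, $t_i\to\pm\infty$. *)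

theory Defs
  imports "HOL-Analysis.Analysis"
begin

type_synonym vf = "real \<times> real \<Rightarrow> real \<times> real"

text \<open>f(x,y) = y, so grad f = (0,1).\<close>
definition sw :: "real \<times> real \<Rightarrow> real" where
  "sw p = snd p"

definition Sigma :: "(real \<times> real) set" where
  "Sigma = {p. sw p = 0}"

definition Lie1 :: "vf \<Rightarrow> real \<times> real \<Rightarrow> real" where
  "Lie1 W p = (0, 1) \<bullet> W p"

definition Lie2 :: "vf \<Rightarrow> real \<times> real \<Rightarrow> real" where
  "Lie2 W p = frechet_derivative (Lie1 W) (at p) (W p)"

definition cross_plus :: "vf \<Rightarrow> vf \<Rightarrow> (real \<times> real) set" where
  "cross_plus X Y = {p \<in> Sigma. Lie1 X p > 0 \<and> Lie1 Y p > 0}"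

definition cross_minus :: "vf \<Rightarrow> vf \<Rightarrow> (real \<times> real) set" where
  "cross_minus X Y = {p \<in> Sigma. Lie1 X p < 0 \<and> Lie1 Y p < 0}"

definition sliding :: "vf \<Rightarrow> vf \<Rightarrow> (real \<times> real) set" where
  "sliding X Y = {p \<in> Sigma. Lie1 X p < 0 \<and> 0 < Lie1 Y p}"

definition escaping :: "vf \<Rightarrow> vf \<Rightarrow> (real \<times> real) set" where
  "escaping X Y = {p \<in> Sigma. Lie1 Y p < 0 \<and> 0 < Lie1 X p}"

definition tangency :: "vf \<Rightarrow> vf \<Rightarrow> (real \<times> real) set" where
  "tangency X Y = {p \<in> Sigma. Lie1 X p = 0 \<or> Lie1 Y p = 0}"

text \<open>Singular tangency: invisible for both fields (X acts on y >= 0, Y on y <= 0).\<close>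
definition singular_tangency :: "vf \<Rightarrow> vf \<Rightarrow> (real \<times> real) set" where
  "singular_tangency X Y = {p \<in> Sigma. Lie1 X p = 0 \<and> Lie2 X p < 0 \<and> Lie1 Y p = 0 \<and> Lie2 Y p > 0}"

definition regular_tangency :: "vf \<Rightarrow> vf \<Rightarrow> (real \<times> real) set" where
  "regular_tangency X Y = tangency X Y - singular_tangency X Y"

definition ZT :: "vf \<Rightarrow> vf \<Rightarrow> vf" where
  "ZT X Y p = (1 / (Lie1 Y p - Lie1 X p)) *\<^sub>R (Lie1 Y p *\<^sub>R X p - Lie1 X p *\<^sub>R Y p)"

definition follows :: "vf \<Rightarrow> (real \<Rightarrow> real \<times> real) \<Rightarrow> real set \<Rightarrow> bool" where
  "follows V \<phi> S \<longleftrightarrow> (\<forall>t\<in>S. (\<phi> has_vector_derivative V (\<phi> t)) (at t within S))"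

definition fwdX :: "vf \<Rightarrow> (real \<Rightarrow> real \<times> real) \<Rightarrow> real \<Rightarrow> bool" where
  "fwdX X \<phi> b \<longleftrightarrow> follows X \<phi> {0..b} \<and> (\<forall>t\<in>{0<..b}. sw (\<phi> t) > 0)"
definition fwdY :: "vf \<Rightarrow> (real \<Rightarrow> real \<times> real) \<Rightarrow> real \<Rightarrow> bool" where
  "fwdY Y \<phi> b \<longleftrightarrow> follows Y \<phi> {0..b} \<and> (\<forall>t\<in>{0<..b}. sw (\<phi> t) < 0)"
definition fwdZ :: "vf \<Rightarrow> vf \<Rightarrow> (real \<times> real) set \<Rightarrow> (real \<Rightarrow> real \<times> real) \<Rightarrow> real \<Rightarrow> bool" where
  "fwdZ X Y R \<phi> b \<longleftrightarrow> follows (ZT X Y) \<phi> {0..b} \<and> (\<forall>t\<in>{0<..b}. \<phi> t \<in> R)"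
definition bwdX :: "vf \<Rightarrow> (real \<Rightarrow> real \<times> real) \<Rightarrow> real \<Rightarrow> bool" where
  "bwdX X \<phi> a \<longleftrightarrow> follows X \<phi> {a..0} \<and> (\<forall>t\<in>{a..<0}. sw (\<phi> t) > 0)"
definition bwdY :: "vf \<Rightarrow> (real \<Rightarrow> real \<times> real) \<Rightarrow> real \<Rightarrow> bool" where
  "bwdY Y \<phi> a \<longleftrightarrow> follows Y \<phi> {a..0} \<and> (\<forall>t\<in>{a..<0}. sw (\<phi> t) < 0)"
definition bwdZ :: "vf \<Rightarrow> vf \<Rightarrow> (real \<times> real) set \<Rightarrow> (real \<Rightarrow> real \<times> real) \<Rightarrow> real \<Rightarrow> bool" where
  "bwdZ X Y R \<phi> a \<longleftrightarrow> follows (ZT X Y) \<phi> {a..0} \<and> (\<forall>t\<in>{a..<0}. \<phi> t \<in> R)"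

definition local_traj :: "vf \<Rightarrow> vf \<Rightarrow> real \<times> real \<Rightarrow> real \<Rightarrow> real \<Rightarrow> (real \<Rightarrow> real \<times> real) \<Rightarrow> bool" where
  "local_traj X Y p a b \<phi> \<longleftrightarrow> a \<le> 0 \<and> 0 \<le> b \<and> \<phi> 0 = p \<and>
     (sw p > 0 \<longrightarrow> follows X \<phi> {a..b} \<and> (\<forall>t\<in>{a<..<b}. sw (\<phi> t) > 0)) \<and>
     (sw p < 0 \<longrightarrow> follows Y \<phi> {a..b} \<and> (\<forall>t\<in>{a<..<b}. sw (\<phi> t) < 0)) \<and>
     (p \<in> cross_plus X Y \<longrightarrow> bwdY Y \<phi> a \<and> fwdX X \<phi> b) \<and>
     (p \<in> cross_minus X Y \<longrightarrow> bwdX X \<phi> a \<and> fwdY Y \<phi> b) \<and>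
     (p \<in> escaping X Y \<longrightarrow> bwdZ X Y (escaping X Y) \<phi> a \<and>
        (fwdX X \<phi> b \<or> fwdY Y \<phi> b \<or> fwdZ X Y (escaping X Y) \<phi> b)) \<and>
     (p \<in> sliding X Y \<longrightarrow> (bwdX X \<phi> a \<or> bwdY Y \<phi> a \<or> bwdZ X Y (sliding X Y) \<phi> a) \<and>
        fwdZ X Y (sliding X Y) \<phi> b) \<and>
     (p \<in> regular_tangency X Y \<longrightarrow>
        (bwdX X \<phi> a \<or> bwdY Y \<phi> a \<or> bwdZ X Y (sliding X Y \<union> escaping X Y) \<phi> a) \<and>
        (fwdX X \<phi> b \<or> fwdY Y \<phi> b \<or> fwdZ X Y (sliding X Y \<union> escaping X Y) \<phi> b)) \<and>
     (p \<in> singular_tangency X Y \<longrightarrow> (\<forall>t\<in>{a..b}. \<phi> t = p))"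

definition global_traj :: "vf \<Rightarrow> vf \<Rightarrow> (real \<Rightarrow> real \<times> real) \<Rightarrow> bool" where
  "global_traj X Y \<gamma> \<longleftrightarrow> (\<exists>T :: int \<Rightarrow> real. strict_mono T \<and>
      filterlim T at_top at_top \<and> filterlim T at_bot at_bot \<and>
      (\<forall>i. \<exists>s\<in>{T i..T (i+1)}.
          local_traj X Y (\<gamma> s) (T i - s) (T (i+1) - s) (\<lambda>\<tau>. \<gamma> (s + \<tau>))))"

definition Pk :: "nat \<Rightarrow> real \<Rightarrow> real" where
  "Pk k x = - (x + (real k - 1) / 2) * (x - (real k - 1) / 2) *
      (\<Prod>i\<in>{1..k-1}. (x - (real i - real k / 2))^2)"

definition r0 :: "nat \<Rightarrow> real" where "r0 k = (1 - real k) / 2"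
definition r1 :: "nat \<Rightarrow> real" where "r1 k = (real k - 1) / 2"
definition pj :: "nat \<Rightarrow> nat \<Rightarrow> real" where "pj k j = real j - real k / 2"

definition Xk :: "nat \<Rightarrow> vf" where "Xk k = (\<lambda>(x, y). (1, deriv (Pk k) x))"
definition Yk :: "nat \<Rightarrow> vf" where "Yk k = (\<lambda>(x, y). (-1, deriv (Pk k) x))"

definition Lambdak :: "nat \<Rightarrow> (real \<times> real) set" where
  "Lambdak k = {(x, Pk k x) | x. r0 k \<le> x \<and> x \<le> r1 k} \<union> {(x, - Pk k x) | x. r0 k \<le> x \<and> x \<le> r1 k}"

definition Xinf :: vf where "Xinf = (\<lambda>(x, y). (1, 2 * sin (2 * pi * x)))"
definition Yinf :: vf where "Yinf = (\<lambda>(x, y). (-1, 2 * sin (2 * pi * x)))"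
definition Pinf :: "real \<Rightarrow> real" where "Pinf x = (1 - cos (2 * pi * x)) / pi"

definition Lambdainf :: "(real \<times> real) set" where
  "Lambdainf = {(x, Pinf x) | x. True} \<union> {(x, - Pinf x) | x. True}"

end

theory Submission
  imports Defs "HOL-Computational_Algebra.Polynomial"
begin

(* Both systems have the form X = (1, Q x), Y = (-1, Q x) with Q = P'. X conserves y - P x
   and Y conserves y + P x, while x moves with unit speed, to the right above the switching
   line and to the left below it. Hence a trajectory starting on the curve y = +-P x (where
   P >= 0) never leaves it; it can switch branches only at zeros of P, and it does not stop
   there, because a zero of P that is not isolated in {P >= 0} cannot be a singular tangency.
   Measure the position on the curve by the angle x + c on the upper and -(x + c) on the
   lower branch: it is well defined modulo 1 since 2 (x + c) is an integer at every zero of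
   P, and along the trajectory it equals t plus a constant modulo 1. The target points are
   the points of the curve with integral angle, so exactly one time in every window
   [t, t + 1) hits them. *)

lemma Ints_iff_of_diff_Ints:
  assumes "a - b \<in> \<int>"
  shows "a \<in> \<int> \<longleftrightarrow> b \<in> \<int>"
proof
  show "b \<in> \<int>" if "a \<in> \<int>"
    using Ints_diff[OF that assms] by simp
  show "a \<in> \<int>" if "b \<in> \<int>"
    using Ints_add[OF assms that] by simp
qed

lemma ex1_Ints_translate_in_unit_interval:
  fixes t a :: real
  shows "\<exists>!s. s \<in> {t..<t + 1} \<and> s + a \<in> \<int>"
proof (rule ex1I)
  have "t \<le> of_int \<lceil>t + a\<rceil> - a" "of_int \<lceil>t + a\<rceil> - a < t + 1"
    using ceiling_correct[of "t + a"] by linarith+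
  then show "of_int \<lceil>t + a\<rceil> - a \<in> {t..<t + 1} \<and> of_int \<lceil>t + a\<rceil> - a + a \<in> \<int>"
    by simp
next
  fix s assume s: "s \<in> {t..<t + 1} \<and> s + a \<in> \<int>"
  then obtain n where n: "s + a = of_int n"
    by (auto elim: Ints_cases)
  then have "t + a \<le> of_int n" "of_int n < t + a + 1"
    using s by auto
  then have "n = \<lceil>t + a\<rceil>"
    by linarith
  then show "s = of_int \<lceil>t + a\<rceil> - a"
    using n by simp
qed

lemma int_seq_bracket:
  fixes T :: "int \<Rightarrow> real"
  assumes "filterlim T at_top at_top" and "filterlim T at_bot at_bot"
  obtains i where "T i \<le> t" and "t < T (i + 1)"
proof -
  obtain N where N: "\<And>n. n \<ge> N \<Longrightarrow> t < T n"
    using assms(1) by (auto simp: filterlim_at_top_dense eventually_at_top_linorder)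
  obtain M where M: "\<And>n. n \<le> M \<Longrightarrow> T n \<le> t"
    using assms(2) by (auto simp: filterlim_at_bot eventually_at_bot_linorder)
  define S where "S = {n \<in> {min M N..N}. T n \<le> t}"
  have "finite S"
    unfolding S_def by (rule finite_subset[of _ "{min M N..N}"]) auto
  moreover have "min M N \<in> S"
    using M by (auto simp: S_def)
  ultimately have i: "Max S \<in> S" and i_max: "\<And>n. n \<in> S \<Longrightarrow> n \<le> Max S"
    by (auto intro: Max_in)
  then have "Max S < N"
    using N[of "Max S"] unfolding S_def by fastforce
  then have "Max S + 1 \<in> {min M N..N}"
    using i by (auto simp: S_def)
  then have "t < T (Max S + 1)"
    using i_max[of "Max S + 1"] unfolding S_def by fastforce
  with i show ?thesis
    using that by (auto simp: S_def)
qed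

lemma strict_local_max_of_deriv2_neg:
  fixes P Q :: "real \<Rightarrow> real"
  assumes P_deriv: "\<And>y. (P has_real_derivative Q y) (at y)"
    and "Q x = 0" and "(Q has_real_derivative D) (at x)" and "D < 0"
  shows "\<forall>\<^sub>F y in at x. P y < P x"
proof -
  have P_cont: "continuous_on S P" for S
    using P_deriv by (meson DERIV_isCont continuous_at_imp_continuous_on)
  obtain d1 where "d1 > 0" and Q_right: "\<And>h. 0 < h \<Longrightarrow> h < d1 \<Longrightarrow> Q (x + h) < 0"
    using DERIV_neg_dec_right[OF assms(3,4)] \<open>Q x = 0\<close> by auto
  obtain d2 where "d2 > 0" and Q_left: "\<And>h. 0 < h \<Longrightarrow> h < d2 \<Longrightarrow> 0 < Q (x - h)"
    using DERIV_neg_dec_left[OF assms(3,4)] \<open>Q x = 0\<close> by auto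
  have "P y < P x" if "x < y" "y < x + d1" for y
  proof (rule DERIV_neg_imp_decreasing_open[OF \<open>x < y\<close> _ P_cont])
    fix z assume "x < z" "z < y"
    then show "\<exists>D. (P has_real_derivative D) (at z) \<and> D < 0"
      using P_deriv Q_right[of "z - x"] that by auto
  qed
  then have "\<forall>\<^sub>F y in at_right x. P y < P x"
    using \<open>d1 > 0\<close> by (subst eventually_at_right[of _ "x + d1"]) (auto intro!: exI[of _ "x + d1"])
  moreover have "P y < P x" if "x - d2 < y" "y < x" for y
  proof (rule DERIV_pos_imp_increasing_open[OF \<open>y < x\<close> _ P_cont])
    fix z assume "y < z" "z < x"
    then show "\<exists>D. (P has_real_derivative D) (at z) \<and> 0 < D"
      using P_deriv Q_left[of "x - z"] that by auto
  qed
  then have "\<forall>\<^sub>F y in at_left x. P y < P x"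
    using \<open>d2 > 0\<close> by (subst eventually_at_left[of "x - d2"]) (auto intro!: exI[of _ "x - d2"])
  ultimately show ?thesis
    by (simp add: eventually_at_split)
qed

lemma follows_side_closure:
  assumes flow: "follows V \<phi> {u..v}" and "u < v"
    and side: "\<forall>t\<in>{u<..<v}. 0 < e * sw (\<phi> t)" and t: "t \<in> {u..v}"
  shows "0 \<le> e * sw (\<phi> t)"
proof -
  have "continuous_on {u..v} \<phi>"
    using flow unfolding follows_def
    by (meson continuous_on_eq_continuous_within has_vector_derivative_continuous)
  then have "continuous_on (closure {u<..<v}) (\<lambda>t. e * sw (\<phi> t))"
    using \<open>u < v\<close> unfolding sw_def by (auto intro!: continuous_intros)
  then show ?thesis
  proof (rule continuous_ge_on_closure)
    show "t \<in> closure {u<..<v}"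
      using t \<open>u < v\<close> by simp
    show "0 \<le> e * sw (\<phi> s)" if "s \<in> {u<..<v}" for s
      using side that by (simp add: less_imp_le)
  qed
qed

section \<open>Fields of the form (e, Q x)\<close>

definition signed_field :: "real \<Rightarrow> (real \<Rightarrow> real) \<Rightarrow> vf" where
  "signed_field e Q = (\<lambda>(x, y). (e, Q x))"

lemma Lie1_signed_field [simp]: "Lie1 (signed_field e Q) p = Q (fst p)"
  by (simp add: Lie1_def signed_field_def case_prod_beta)

lemma Lie2_signed_field:
  assumes "(Q has_real_derivative D) (at (fst p))"
  shows "Lie2 (signed_field e Q) p = e * D"
proof -
  have "((\<lambda>p. Q (fst p)) has_derivative (\<lambda>h. D * fst h)) (at p)"
    using has_derivative_compose[OF has_derivative_fst[OF has_derivative_ident], of Q "(*) D"] assms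
    by (simp add: has_field_derivative_def)
  then have "frechet_derivative (\<lambda>p. Q (fst p)) (at p) = (\<lambda>h. D * fst h)"
    by (rule frechet_derivative_at[symmetric])
  moreover have "Lie1 (signed_field e Q) = (\<lambda>p. Q (fst p))"
    by (simp add: fun_eq_iff)
  ultimately show ?thesis
    by (simp add: Lie2_def signed_field_def case_prod_beta)
qed

lemma sliding_signed_fields [simp]: "sliding (signed_field e Q) (signed_field e' Q) = {}"
  by (auto simp: sliding_def)

lemma escaping_signed_fields [simp]: "escaping (signed_field e Q) (signed_field e' Q) = {}"
  by (auto simp: escaping_def)

lemma singular_tangency_signed_fieldsD:
  assumes "p \<in> singular_tangency (signed_field 1 Q) (signed_field (-1) Q)"
    and "(Q has_real_derivative D) (at (fst p))"
  shows "Q (fst p) = 0" "D < 0"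
  using assms Lie2_signed_field[OF assms(2)] by (auto simp: singular_tangency_def)

lemma signed_field_first_integrals:
  assumes P_deriv: "\<And>x. (P has_real_derivative Q x) (at x)"
    and e: "e \<in> {1, -1}" and flow: "follows (signed_field e Q) \<phi> {u..v}"
  obtains cx cy where "\<And>t. t \<in> {u..v} \<Longrightarrow> fst (\<phi> t) = e * t + cx"
    and "\<And>t. t \<in> {u..v} \<Longrightarrow> snd (\<phi> t) = e * P (fst (\<phi> t)) + cy"
proof -
  have fst_deriv: "((\<lambda>t. fst (\<phi> t)) has_real_derivative e) (at t within {u..v})"
    and snd_deriv: "((\<lambda>t. snd (\<phi> t)) has_real_derivative Q (fst (\<phi> t))) (at t within {u..v})"
    if "t \<in> {u..v}" for t
  proof -
    have "(\<phi> has_derivative (\<lambda>h. h *\<^sub>R (e, Q (fst (\<phi> t))))) (at t within {u..v})"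
      using flow that
      by (simp add: follows_def signed_field_def case_prod_beta has_vector_derivative_def)
    from has_derivative_fst[OF this] has_derivative_snd[OF this]
    show "((\<lambda>t. fst (\<phi> t)) has_real_derivative e) (at t within {u..v})"
      and "((\<lambda>t. snd (\<phi> t)) has_real_derivative Q (fst (\<phi> t))) (at t within {u..v})"
      by (simp_all add: has_field_derivative_def mult_commute_abs)
  qed
  have "\<exists>cx. \<forall>t\<in>{u..v}. fst (\<phi> t) - e * t = cx"
    by (rule has_field_derivative_zero_constant)
      (auto intro!: derivative_eq_intros fst_deriv)
  moreover have "e * e = 1"
    using e by auto
  then have "\<exists>cy. \<forall>t\<in>{u..v}. snd (\<phi> t) - e * P (fst (\<phi> t)) = cy"
    by (intro has_field_derivative_zero_constant)
      (auto intro!: derivative_eq_intros snd_deriv DERIV_chain2[OF P_deriv fst_deriv]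
        simp: algebra_simps)
  ultimately show ?thesis
    using that by (metis diff_eq_eq add.commute)
qed

definition flow_arc :: "(real \<Rightarrow> real) \<Rightarrow> (real \<Rightarrow> real \<times> real) \<Rightarrow> real \<Rightarrow> real \<Rightarrow> bool" where
  "flow_arc Q \<phi> u v \<longleftrightarrow> u = v \<or>
     (\<exists>e \<in> {1, -1}. follows (signed_field e Q) \<phi> {u..v} \<and> (\<forall>t\<in>{u<..<v}. 0 < e * sw (\<phi> t)))"

lemma flow_arc_subinterval:
  assumes "flow_arc Q \<phi> u v" and "u \<le> u'" and "u' \<le> v'" and "v' \<le> v"
  shows "flow_arc Q \<phi> u' v'"
proof -
  have "follows V \<phi> {u'..v'}" if "follows V \<phi> {u..v}" for V
    using that assms(2-4) unfolding follows_def
    by (force intro: has_vector_derivative_within_subset[where S = "{u..v}"])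
  then show ?thesis
    using assms unfolding flow_arc_def by fastforce
qed

lemma flow_arc_backward:
  assumes "a \<le> 0"
    and "bwdX (signed_field 1 Q) \<phi> a \<or> bwdY (signed_field (-1) Q) \<phi> a
      \<or> bwdZ (signed_field 1 Q) (signed_field (-1) Q) {} \<phi> a"
  shows "flow_arc Q \<phi> a 0"
  using assms unfolding flow_arc_def bwdX_def bwdY_def bwdZ_def
  by (cases "a = 0") (auto intro!: bexI[of _ 1] bexI[of _ "-1"])

lemma flow_arc_forward:
  assumes "0 \<le> b"
    and "fwdX (signed_field 1 Q) \<phi> b \<or> fwdY (signed_field (-1) Q) \<phi> b
      \<or> fwdZ (signed_field 1 Q) (signed_field (-1) Q) {} \<phi> b"
  shows "flow_arc Q \<phi> 0 b"
  using assms unfolding flow_arc_def fwdX_def fwdY_def fwdZ_def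
  by (cases "b = 0") (auto intro!: bexI[of _ 1] bexI[of _ "-1"] dest: spec[of _ b])

lemma local_traj_flow_arcs:
  assumes loc: "local_traj (signed_field 1 Q) (signed_field (-1) Q) p a b \<phi>"
    and not_singular: "p \<notin> singular_tangency (signed_field 1 Q) (signed_field (-1) Q)"
  shows "flow_arc Q \<phi> a 0 \<and> flow_arc Q \<phi> 0 b"
proof -
  have ab: "a \<le> 0" "0 \<le> b"
    using loc by (auto simp: local_traj_def)
  consider "sw p \<noteq> 0" | "p \<in> cross_plus (signed_field 1 Q) (signed_field (-1) Q)"
    | "p \<in> cross_minus (signed_field 1 Q) (signed_field (-1) Q)"
    | "p \<in> regular_tangency (signed_field 1 Q) (signed_field (-1) Q)"
    using not_singular
    by (fastforce simp: cross_plus_def cross_minus_def regular_tangency_def tangency_def Sigma_def)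
  then show ?thesis
  proof cases
    case 1
    then have "flow_arc Q \<phi> a b"
      using loc unfolding local_traj_def flow_arc_def
      by (auto simp: neq_iff intro!: bexI[of _ 1] bexI[of _ "-1"])
    then show ?thesis
      using ab by (auto intro: flow_arc_subinterval)
  qed (use loc ab in \<open>auto simp: local_traj_def intro!: flow_arc_backward flow_arc_forward\<close>)
qed

section \<open>Trajectories on the curve y = e P x\<close>

definition pm_graph :: "(real \<Rightarrow> real) \<Rightarrow> (real \<times> real) set" where
  "pm_graph P = {(x, e * P x) | x e. 0 \<le> P x \<and> e \<in> {1, -1}}"

(* The position on the curve, in turns. At y = 0 the upper-branch value is taken; in
   graph_cycle this choice is immaterial modulo 1 (zero_angle). *)
definition cycle_angle :: "real \<Rightarrow> real \<times> real \<Rightarrow> real" where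
  "cycle_angle c q = (if sw q < 0 then - (fst q + c) else fst q + c)"

lemma pm_graph_eq:
  "pm_graph P = {(x, P x) | x. 0 \<le> P x} \<union> {(x, - P x) | x. 0 \<le> P x}"
  unfolding pm_graph_def by force

lemma signed_flow_on_pm_graph:
  assumes P_deriv: "\<And>x. (P has_real_derivative Q x) (at x)"
    and e: "e \<in> {1, -1}" and flow: "follows (signed_field e Q) \<phi> {u..v}" and "u < v"
    and side: "\<forall>t\<in>{u<..<v}. 0 < e * sw (\<phi> t)"
    and w: "w \<in> {u..v}" and on: "\<phi> w \<in> pm_graph P"
  obtains cx where "\<And>t. t \<in> {u..v} \<Longrightarrow>
      \<phi> t = (e * t + cx, e * P (e * t + cx)) \<and> 0 \<le> P (e * t + cx)"
proof -
  obtain cx cy where x: "\<And>t. t \<in> {u..v} \<Longrightarrow> fst (\<phi> t) = e * t + cx"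
    and y: "\<And>t. t \<in> {u..v} \<Longrightarrow> snd (\<phi> t) = e * P (fst (\<phi> t)) + cy"
    using signed_field_first_integrals[OF P_deriv e flow] by blast
  have closed_side: "0 \<le> e * snd (\<phi> t)" if "t \<in> {u..v}" for t
    using follows_side_closure[OF flow \<open>u < v\<close> side that] by (simp add: sw_def)
  obtain xw ew where xw: "0 \<le> P xw" "ew \<in> {1, -1}" "\<phi> w = (xw, ew * P xw)"
    using on by (auto simp: pm_graph_def)
  have "snd (\<phi> w) = e * P xw"
    using closed_side[OF w] xw e by (cases "P xw = 0") (auto simp: zero_le_mult_iff)
  then have "cy = 0"
    using y[OF w] xw(3) by auto
  have "\<phi> t = (e * t + cx, e * P (e * t + cx)) \<and> 0 \<le> P (e * t + cx)" if "t \<in> {u..v}" for t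
  proof -
    have "\<phi> t = (e * t + cx, e * P (e * t + cx))"
      using x[OF that] y[OF that] \<open>cy = 0\<close> by (simp add: prod_eq_iff)
    moreover have "e * e = 1"
      using e by auto
    ultimately show ?thesis
      using closed_side[OF that] by (simp add: mult.assoc[symmetric])
  qed
  then show ?thesis
    using that by blast
qed

locale graph_cycle =
  fixes P Q :: "real \<Rightarrow> real" and c :: real
  assumes P_deriv: "\<And>x. (P has_real_derivative Q x) (at x)"
    and Q_differentiable: "\<And>x. Q differentiable (at x)"
    and zero_angle: "\<And>x. P x = 0 \<Longrightarrow> 2 * (x + c) \<in> \<int>"
    and zero_islimpt: "\<And>x. P x = 0 \<Longrightarrow> x islimpt {y. 0 \<le> P y}"
      \<comment> \<open>excludes singular tangencies on the curve, which are strict local maxima of P\<close>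
begin

definition revolves :: "(real \<Rightarrow> real \<times> real) \<Rightarrow> real set \<Rightarrow> bool" where
  "revolves \<phi> S \<longleftrightarrow> (\<exists>A. \<forall>t\<in>S. \<phi> t \<in> pm_graph P \<and> cycle_angle c (\<phi> t) - t - A \<in> \<int>)"

lemma cycle_angle_pm_graph:
  assumes "0 \<le> P x" and "e \<in> {1, -1}"
  shows "cycle_angle c (x, e * P x) - e * (x + c) \<in> \<int>"
proof (cases "P x = 0")
  case True
  have "x + c - - (x + c) = 2 * (x + c)"
    by simp
  with True zero_angle[OF True] assms(2) show ?thesis
    by (auto simp: cycle_angle_def sw_def)
next
  case False
  with assms show ?thesis
    by (auto simp: cycle_angle_def sw_def)
qed

lemma cycle_angle_Ints_iff:
  assumes "0 \<le> P x" and "e \<in> {1, -1}"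
  shows "cycle_angle c (x, e * P x) \<in> \<int> \<longleftrightarrow> x + c \<in> \<int>"
  using Ints_iff_of_diff_Ints[OF cycle_angle_pm_graph[OF assms]] assms(2)
  by (auto simp: minus_in_Ints_iff[of "x + c", simplified])

lemma pm_graph_not_singular_tangency:
  assumes "q \<in> pm_graph P"
  shows "q \<notin> singular_tangency (signed_field 1 Q) (signed_field (-1) Q)"
proof
  assume singular: "q \<in> singular_tangency (signed_field 1 Q) (signed_field (-1) Q)"
  obtain x where q: "q = (x, 0)" and "P x = 0"
    using assms singular by (auto simp: pm_graph_def singular_tangency_def Sigma_def sw_def)
  obtain D where D: "(Q has_real_derivative D) (at x)"
    using Q_differentiable real_differentiable_def by blast
  have "Q x = 0" "D < 0"
    using singular_tangency_signed_fieldsD[OF singular] D q by auto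
  then have "\<forall>\<^sub>F y in at x. P y < P x"
    using strict_local_max_of_deriv2_neg[OF P_deriv _ D] by blast
  then have "\<forall>\<^sub>F y in at x. y \<notin> {y. 0 \<le> P y}"
    using \<open>P x = 0\<close> by (auto elim: eventually_mono)
  with zero_islimpt[OF \<open>P x = 0\<close>] show False
    by (simp add: islimpt_iff_eventually)
qed

lemma revolves_angle_diff:
  assumes "revolves \<phi> S" and "s \<in> S" and "t \<in> S"
  shows "cycle_angle c (\<phi> t) - cycle_angle c (\<phi> s) - (t - s) \<in> \<int>"
proof -
  obtain A where A: "\<And>t. t \<in> S \<Longrightarrow> cycle_angle c (\<phi> t) - t - A \<in> \<int>"
    using assms(1) by (auto simp: revolves_def)
  from Ints_diff[OF A[OF assms(3)] A[OF assms(2)]] show ?thesis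
    by (simp add: algebra_simps)
qed

lemma revolves_Un:
  assumes "revolves \<phi> S" and "revolves \<phi> T" and "r \<in> S" and "r \<in> T"
  shows "revolves \<phi> (S \<union> T)"
proof -
  define A where "A = cycle_angle c (\<phi> r) - r"
  have diff: "cycle_angle c (\<phi> t) - t - A = cycle_angle c (\<phi> t) - cycle_angle c (\<phi> r) - (t - r)" for t
    by (simp add: A_def)
  have "cycle_angle c (\<phi> t) - t - A \<in> \<int>" if "t \<in> S \<union> T" for t
    using that assms revolves_angle_diff[of \<phi> S r t] revolves_angle_diff[of \<phi> T r t]
    unfolding diff by blast
  moreover have "\<phi> t \<in> pm_graph P" if "t \<in> S \<union> T" for t
    using that assms(1,2) by (auto simp: revolves_def)
  ultimately show ?thesis
    unfolding revolves_def by blast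
qed

lemma revolves_pm_graph: "revolves \<phi> S \<Longrightarrow> t \<in> S \<Longrightarrow> \<phi> t \<in> pm_graph P"
  unfolding revolves_def by blast

lemma revolves_subset: "revolves \<phi> S \<Longrightarrow> T \<subseteq> S \<Longrightarrow> revolves \<phi> T"
  unfolding revolves_def by blast

lemma revolves_shift:
  assumes "revolves (\<lambda>\<tau>. \<phi> (s + \<tau>)) {a..b}"
  shows "revolves \<phi> {s + a..s + b}"
proof -
  obtain A where A: "\<forall>\<tau>\<in>{a..b}. \<phi> (s + \<tau>) \<in> pm_graph P \<and> cycle_angle c (\<phi> (s + \<tau>)) - \<tau> - A \<in> \<int>"
    using assms by (auto simp: revolves_def)
  have "\<phi> t \<in> pm_graph P \<and> cycle_angle c (\<phi> t) - t - (A - s) \<in> \<int>" if "t \<in> {s + a..s + b}" for t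
    using A[rule_format, of "t - s"] that by (auto simp: algebra_simps)
  then show ?thesis
    unfolding revolves_def by blast
qed

lemma flow_arc_revolves:
  assumes arc: "flow_arc Q \<phi> u v" and w: "w \<in> {u..v}" and on: "\<phi> w \<in> pm_graph P"
  shows "revolves \<phi> {u..v}"
proof (cases "u = v")
  case True
  with w have "{u..v} = {w}"
    by auto
  with on show ?thesis
    unfolding revolves_def by (auto intro!: exI[of _ "cycle_angle c (\<phi> w) - w"])
next
  case False
  with w have "u < v"
    by auto
  obtain e where e: "e \<in> {1, -1}" and flow: "follows (signed_field e Q) \<phi> {u..v}"
    and side: "\<forall>t\<in>{u<..<v}. 0 < e * sw (\<phi> t)"
    using arc False unfolding flow_arc_def by blast
  obtain cx where graph: "\<And>t. t \<in> {u..v} \<Longrightarrow>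
      \<phi> t = (e * t + cx, e * P (e * t + cx)) \<and> 0 \<le> P (e * t + cx)"
    using signed_flow_on_pm_graph[OF P_deriv e flow \<open>u < v\<close> side w on] by blast
  have "\<phi> t \<in> pm_graph P \<and> cycle_angle c (\<phi> t) - t - e * (cx + c) \<in> \<int>" if "t \<in> {u..v}" for t
  proof -
    have "e * (e * t + cx + c) = t + e * (cx + c)"
      using e by (auto simp: algebra_simps)
    then show ?thesis
      using graph[OF that] cycle_angle_pm_graph[of "e * t + cx" e] e
      by (auto simp: pm_graph_def diff_diff_eq)
  qed
  then show ?thesis
    unfolding revolves_def by blast
qed

lemma local_traj_revolves:
  assumes loc: "local_traj (signed_field 1 Q) (signed_field (-1) Q) p a b \<phi>"
    and w: "w \<in> {a..b}" and on: "\<phi> w \<in> pm_graph P"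
  shows "revolves \<phi> {a..b}"
proof -
  have ab: "a \<le> 0" "0 \<le> b"
    using loc by (auto simp: local_traj_def)
  have "p \<notin> singular_tangency (signed_field 1 Q) (signed_field (-1) Q)"
  proof
    assume "p \<in> singular_tangency (signed_field 1 Q) (signed_field (-1) Q)"
    then have "\<phi> w = p"
      using loc w by (auto simp: local_traj_def)
    with on \<open>p \<in> _\<close> show False
      using pm_graph_not_singular_tangency by blast
  qed
  then have arcs: "flow_arc Q \<phi> a 0" "flow_arc Q \<phi> 0 b"
    using local_traj_flow_arcs[OF loc] by blast+
  have "revolves \<phi> {a..0} \<and> revolves \<phi> {0..b}"
  proof (cases "w \<le> 0")
    case True
    with w have "revolves \<phi> {a..0}"
      by (intro flow_arc_revolves[OF arcs(1) _ on]) auto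
    moreover have "revolves \<phi> {0..b}"
      using flow_arc_revolves[OF arcs(2)] revolves_pm_graph[OF calculation] ab by auto
    ultimately show ?thesis ..
  next
    case False
    with w have "revolves \<phi> {0..b}"
      by (intro flow_arc_revolves[OF arcs(2) _ on]) auto
    moreover have "revolves \<phi> {a..0}"
      using flow_arc_revolves[OF arcs(1)] revolves_pm_graph[OF calculation] ab by auto
    ultimately show ?thesis
      by blast
  qed
  moreover have "{a..b} = {a..0} \<union> {0..b}"
    using ab by auto
  ultimately show ?thesis
    using revolves_Un[of \<phi> "{a..0}" "{0..b}" 0] ab by auto
qed

lemma revolves_chain:
  fixes T :: "int \<Rightarrow> real"
  assumes T_step: "\<And>i. T i \<le> T (i + 1)"
    and piece: "\<And>i w. w \<in> {T i..T (i + 1)} \<Longrightarrow> \<phi> w \<in> pm_graph P \<Longrightarrow> revolves \<phi> {T i..T (i + 1)}"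
    and s: "s \<in> {T i0..T (i0 + 1)}" "\<phi> s \<in> pm_graph P"
  shows "revolves \<phi> (insert s {T i..T (i + 1)})"
proof (induction i rule: int_induct[where k = i0])
  case base
  show ?case
    using piece[OF s] s(1) by (simp add: insert_absorb)
next
  case (step1 i)
  have "revolves \<phi> {T (i + 1)..T (i + 1 + 1)}"
    using piece[of "T (i + 1)" "i + 1"] revolves_pm_graph[OF step1.IH, of "T (i + 1)"]
      T_step[of i] T_step[of "i + 1"] by simp
  with step1.IH have "revolves \<phi> (insert s {T i..T (i + 1)} \<union> {T (i + 1)..T (i + 1 + 1)})"
    using T_step[of i] T_step[of "i + 1"] by (intro revolves_Un[where r = "T (i + 1)"]) auto
  then show ?case
    by (rule revolves_subset) auto
next
  case (step2 i)
  have "revolves \<phi> {T (i - 1)..T (i - 1 + 1)}"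
    using piece[of "T i" "i - 1"] revolves_pm_graph[OF step2.IH, of "T i"]
      T_step[of "i - 1"] T_step[of i] by simp
  with step2.IH have "revolves \<phi> (insert s {T i..T (i + 1)} \<union> {T (i - 1)..T (i - 1 + 1)})"
    using T_step[of i] T_step[of "i - 1"] by (intro revolves_Un[where r = "T i"]) auto
  then show ?case
    by (rule revolves_subset) auto
qed

lemma global_traj_revolves:
  assumes "global_traj (signed_field 1 Q) (signed_field (-1) Q) \<gamma>" and "\<gamma> 0 \<in> pm_graph P"
  shows "revolves \<gamma> UNIV"
proof -
  obtain T :: "int \<Rightarrow> real" where T: "strict_mono T" "filterlim T at_top at_top" "filterlim T at_bot at_bot"
    and pieces: "\<And>i. \<exists>s\<in>{T i..T (i + 1)}. local_traj (signed_field 1 Q) (signed_field (-1) Q)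
        (\<gamma> s) (T i - s) (T (i + 1) - s) (\<lambda>\<tau>. \<gamma> (s + \<tau>))"
    using assms(1) unfolding global_traj_def by blast
  have T_step: "T i \<le> T (i + 1)" for i
    using T(1) by (simp add: strict_mono_less_eq)
  have piece: "revolves \<gamma> {T i..T (i + 1)}" if "w \<in> {T i..T (i + 1)}" "\<gamma> w \<in> pm_graph P" for i w
  proof -
    obtain s where loc: "local_traj (signed_field 1 Q) (signed_field (-1) Q)
        (\<gamma> s) (T i - s) (T (i + 1) - s) (\<lambda>\<tau>. \<gamma> (s + \<tau>))"
      using pieces by blast
    have "revolves (\<lambda>\<tau>. \<gamma> (s + \<tau>)) {T i - s..T (i + 1) - s}"
      by (rule local_traj_revolves[OF loc, of "w - s"]) (use that in auto)
    then show ?thesis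
      using revolves_shift by fastforce
  qed
  obtain i0 where "T i0 \<le> 0" "0 < T (i0 + 1)"
    using int_seq_bracket[OF T(2,3)] by blast
  then have through_0: "revolves \<gamma> (insert 0 {T i..T (i + 1)})" for i
    using revolves_chain[of T \<gamma> 0 i0 i, OF T_step piece _ assms(2)] by simp
  have "\<gamma> t \<in> pm_graph P \<and> cycle_angle c (\<gamma> t) - t - cycle_angle c (\<gamma> 0) \<in> \<int>" for t
  proof -
    obtain i where "T i \<le> t" "t < T (i + 1)"
      using int_seq_bracket[OF T(2,3)] by blast
    then show ?thesis
      using revolves_angle_diff[OF through_0[of i], of 0 t] revolves_pm_graph[OF through_0[of i], of t]
      by (simp add: algebra_simps)
  qed
  then show ?thesis
    unfolding revolves_def by blast
qed

theorem global_traj_unique_hit: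
  assumes "global_traj (signed_field 1 Q) (signed_field (-1) Q) \<gamma>" and "\<gamma> 0 \<in> pm_graph P"
    and target: "\<And>q. q \<in> pm_graph P \<Longrightarrow> q \<in> S \<longleftrightarrow> cycle_angle c q \<in> \<int>"
  shows "\<exists>!t'. t' \<in> {t..<t + 1} \<and> \<gamma> t' \<in> S"
proof -
  have rev: "revolves \<gamma> UNIV"
    using global_traj_revolves[OF assms(1,2)] .
  have "\<gamma> s \<in> S \<longleftrightarrow> s + cycle_angle c (\<gamma> 0) \<in> \<int>" for s
  proof -
    have "\<gamma> s \<in> S \<longleftrightarrow> cycle_angle c (\<gamma> s) \<in> \<int>"
      using target revolves_pm_graph[OF rev] by blast
    also have "\<dots> \<longleftrightarrow> s + cycle_angle c (\<gamma> 0) \<in> \<int>"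
      using revolves_angle_diff[OF rev, of 0 s]
      by (intro Ints_iff_of_diff_Ints) (simp_all add: algebra_simps)
    finally show ?thesis .
  qed
  then show ?thesis
    using ex1_Ints_translate_in_unit_interval by simp
qed

end

section \<open>The periodic system\<close>

lemma Xinf_eq: "Xinf = signed_field 1 (\<lambda>x. 2 * sin (2 * pi * x))"
  by (simp add: Xinf_def signed_field_def)

lemma Yinf_eq: "Yinf = signed_field (-1) (\<lambda>x. 2 * sin (2 * pi * x))"
  by (simp add: Yinf_def signed_field_def)

lemma Pinf_nonneg: "0 \<le> Pinf x"
  by (simp add: Pinf_def)

lemma Lambdainf_eq: "Lambdainf = pm_graph Pinf"
  by (simp add: Lambdainf_def pm_graph_eq Pinf_nonneg)

lemma Pinf_eq_0_iff: "Pinf x = 0 \<longleftrightarrow> x \<in> \<int>"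
proof -
  have "Pinf x = 0 \<longleftrightarrow> cos (2 * pi * x) = 1"
    by (simp add: Pinf_def)
  also have "\<dots> \<longleftrightarrow> x \<in> \<int>"
    by (auto simp: cos_one_2pi_int Ints_def)
  finally show ?thesis .
qed

lemma graph_cycle_Pinf: "graph_cycle Pinf (\<lambda>x. 2 * sin (2 * pi * x)) 0"
proof
  show "(Pinf has_real_derivative 2 * sin (2 * pi * x)) (at x)" for x
    unfolding Pinf_def[abs_def] by (auto intro!: derivative_eq_intros)
  show "(\<lambda>x. 2 * sin (2 * pi * x)) differentiable (at x)" for x :: real
    unfolding real_differentiable_def by (auto intro!: derivative_eq_intros exI)
  show "2 * (x + 0) \<in> \<int>" if "Pinf x = 0" for x
    using that by (simp add: Pinf_eq_0_iff)
  show "x islimpt {y. 0 \<le> Pinf y}" for x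
    by (simp add: Pinf_nonneg)
qed

lemma Pinf_target:
  assumes "q \<in> pm_graph Pinf"
  shows "q \<in> {(real_of_int j, 0) | j::int. True} \<longleftrightarrow> cycle_angle 0 q \<in> \<int>"
proof -
  obtain x e where q: "q = (x, e * Pinf x)" and e: "e \<in> {1, -1}"
    using assms by (auto simp: pm_graph_def)
  have "cycle_angle 0 q \<in> \<int> \<longleftrightarrow> x \<in> \<int>"
    using graph_cycle.cycle_angle_Ints_iff[OF graph_cycle_Pinf Pinf_nonneg e] q by simp
  also have "\<dots> \<longleftrightarrow> q \<in> {(real_of_int j, 0) | j::int. True}"
    using q by (auto simp: Pinf_eq_0_iff elim!: Ints_cases)
  finally show ?thesis ..
qed

section \<open>The polynomial systems\<close>

definition pk_poly :: "nat \<Rightarrow> real poly" where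
  "pk_poly k = smult (-1) ([:(real k - 1) / 2, 1:] * [:- ((real k - 1) / 2), 1:] *
     (\<Prod>i\<in>{1..k-1}. [:- (real i - real k / 2), 1:] ^ 2))"

lemma Pk_eq_poly: "Pk k = poly (pk_poly k)"
proof
  fix x
  have "poly (\<Prod>i\<in>{1..k-1}. [:- (real i - real k / 2), 1:] ^ 2) x
      = (\<Prod>i\<in>{1..k-1}. (x - (real i - real k / 2)) ^ 2)"
    unfolding poly_prod by (intro prod.cong refl) (simp add: poly_power algebra_simps)
  moreover have "poly [:(real k - 1) / 2, 1:] x = x + (real k - 1) / 2"
    and "poly [:- ((real k - 1) / 2), 1:] x = x - (real k - 1) / 2"
    by simp_all
  ultimately show "Pk k x = poly (pk_poly k) x"
    unfolding Pk_def pk_poly_def poly_smult poly_mult by (simp only: mult_minus1 minus_mult_left)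
qed

lemma deriv_Pk_eq_poly: "deriv (Pk k) = poly (pderiv (pk_poly k))"
  unfolding Pk_eq_poly by (rule ext) (rule DERIV_imp_deriv[OF poly_DERIV])

lemma Pk_eq_0_iff: "Pk k x = 0 \<longleftrightarrow> x = r0 k \<or> x = r1 k \<or> (\<exists>j\<in>{1..k-1}. x = pj k j)"
proof -
  have "r0 k = - ((real k - 1) / 2)"
    by (simp add: r0_def diff_divide_distrib)
  then show ?thesis
    unfolding Pk_def mult_eq_0_iff neg_equal_0_iff_equal power_eq_0_iff
      prod_zero_iff[OF finite_atLeastAtMost]
    by (auto simp: r1_def pj_def add_eq_0_iff2 simp del: of_nat_diff)
qed

lemma pj_between_r0_r1:
  assumes "j \<in> {1..k-1}"
  shows "r0 k < pj k j \<and> pj k j < r1 k"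
proof -
  have "1 \<le> real j" "real j \<le> real k - 1"
    using assms by (auto simp: of_nat_diff)
  then show ?thesis
    unfolding r0_def r1_def pj_def diff_divide_distrib by (intro conjI) linarith+
qed

lemma Pk_nonneg_iff:
  assumes "2 \<le> k"
  shows "0 \<le> Pk k x \<longleftrightarrow> x \<in> {r0 k..r1 k}"
proof -
  define r where "r = (real k - 1) / 2"
  have r: "r0 k = - r" "r1 k = r" "0 < r"
    using assms by (auto simp: r_def r0_def r1_def diff_divide_distrib)
  define S where "S = (\<Prod>i\<in>{1..k-1}. (x - (real i - real k / 2)) ^ 2)"
  have Pk: "Pk k x = (x + r) * (r - x) * S"
    unfolding Pk_def S_def r_def[symmetric] by (simp only: minus_mult_commute minus_diff_eq)
  have "0 \<le> S"
    unfolding S_def by (intro prod_nonneg) auto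
  show ?thesis
  proof
    assume "0 \<le> Pk k x"
    show "x \<in> {r0 k..r1 k}"
    proof (rule ccontr)
      assume out: "x \<notin> {r0 k..r1 k}"
      have "x \<noteq> real i - real k / 2" if "i \<in> {1..k-1}" for i
        using pj_between_r0_r1[OF that] out by (auto simp: pj_def)
      then have "0 < S"
        unfolding S_def by (intro prod_pos) auto
      moreover have "(x + r) * (r - x) < 0"
        using out r by (auto simp: mult_less_0_iff)
      ultimately have "(x + r) * (r - x) * S < 0"
        by (simp add: mult_neg_pos)
      with \<open>0 \<le> Pk k x\<close> Pk show False
        by simp
    qed
  next
    assume "x \<in> {r0 k..r1 k}"
    then show "0 \<le> Pk k x"
      using Pk r \<open>0 \<le> S\<close> by simp
  qed
qed

lemma Lambdak_eq: "2 \<le> k \<Longrightarrow> Lambdak k = pm_graph (Pk k)"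
  by (simp add: Lambdak_def pm_graph_eq Pk_nonneg_iff)

lemma graph_cycle_Pk:
  assumes "2 \<le> k"
  shows "graph_cycle (Pk k) (deriv (Pk k)) (real k / 2)"
proof
  show "(Pk k has_real_derivative deriv (Pk k) x) (at x)" for x
    unfolding deriv_Pk_eq_poly by (simp only: Pk_eq_poly poly_DERIV)
  show "deriv (Pk k) differentiable (at x)" for x
    unfolding deriv_Pk_eq_poly real_differentiable_def by (rule exI) (rule poly_DERIV)
  show "2 * (x + real k / 2) \<in> \<int>" if "Pk k x = 0" for x
  proof -
    have "2 * (r0 k + real k / 2) = 1" "2 * (r1 k + real k / 2) = of_int (2 * int k - 1)"
      "2 * (pj k j + real k / 2) = of_int (2 * j)" for j
      by (simp_all add: r0_def r1_def pj_def field_simps)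
    with that show ?thesis
      unfolding Pk_eq_0_iff by (metis Ints_1 Ints_of_int)
  qed
  show "x islimpt {y. 0 \<le> Pk k y}" if "Pk k x = 0" for x
  proof -
    have "{y. 0 \<le> Pk k y} = {r0 k..r1 k}"
      using Pk_nonneg_iff[OF assms] by blast
    moreover have "x \<in> {r0 k..r1 k}"
      using that Pk_nonneg_iff[OF assms, of x] by simp
    moreover have "r0 k < r1 k"
      using assms by (simp add: r0_def r1_def)
    ultimately show ?thesis
      by simp
  qed
qed

lemma Pk_target:
  assumes "2 \<le> k" and "q \<in> pm_graph (Pk k)"
  shows "q \<in> {(pj k j, 0) | j. 1 \<le> j \<and> j \<le> k - 1} \<longleftrightarrow> cycle_angle (real k / 2) q \<in> \<int>"
proof -
  obtain x e where q: "q = (x, e * Pk k x)" and x: "0 \<le> Pk k x" and e: "e \<in> {1, -1}"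
    using assms(2) by (auto simp: pm_graph_def)
  have "cycle_angle (real k / 2) q \<in> \<int> \<longleftrightarrow> x + real k / 2 \<in> \<int>"
    using graph_cycle.cycle_angle_Ints_iff[OF graph_cycle_Pk[OF assms(1)] x e] q by simp
  also have "\<dots> \<longleftrightarrow> (\<exists>j. 1 \<le> j \<and> j \<le> k - 1 \<and> x = pj k j)"
  proof
    assume "x + real k / 2 \<in> \<int>"
    then obtain m where m: "x + real k / 2 = of_int m"
      by (auto elim: Ints_cases)
    have "r0 k \<le> x" "x \<le> r1 k"
      using x Pk_nonneg_iff[OF assms(1)] by auto
    then have "1 \<le> m" "m \<le> int k - 1"
      using m by (auto simp: r0_def r1_def)
    with m show "\<exists>j. 1 \<le> j \<and> j \<le> k - 1 \<and> x = pj k j"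
      by (intro exI[of _ "nat m"]) (auto simp: pj_def)
  qed (auto simp: pj_def)
  also have "\<dots> \<longleftrightarrow> q \<in> {(pj k j, 0) | j. 1 \<le> j \<and> j \<le> k - 1}"
  proof
    assume "\<exists>j. 1 \<le> j \<and> j \<le> k - 1 \<and> x = pj k j"
    then obtain j where j: "1 \<le> j" "j \<le> k - 1" "x = pj k j"
      by blast
    then have "Pk k x = 0"
      by (auto simp: Pk_eq_0_iff)
    with j q show "q \<in> {(pj k j, 0) | j. 1 \<le> j \<and> j \<le> k - 1}"
      by auto
  qed (use q in auto)
  finally show ?thesis ..
qed

lemma Xk_eq: "Xk k = signed_field 1 (deriv (Pk k))"
  by (simp add: Xk_def signed_field_def)

lemma Yk_eq: "Yk k = signed_field (-1) (deriv (Pk k))"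
  by (simp add: Yk_def signed_field_def)

theorem mainTheorem11:
  shows "(\<forall>k::nat. k \<ge> 2 \<longrightarrow> (\<forall>\<gamma>. global_traj (Xk k) (Yk k) \<gamma> \<and> \<gamma> 0 \<in> Lambdak k \<longrightarrow>
            (\<forall>t::real. \<exists>!t'. t' \<in> {t..<t+1} \<and>
               \<gamma> t' \<in> {(pj k j, 0) | j. 1 \<le> j \<and> j \<le> k - 1})))
       \<and> (\<forall>\<gamma>. global_traj Xinf Yinf \<gamma> \<and> \<gamma> 0 \<in> Lambdainf \<longrightarrow>
            (\<forall>t::real. \<exists>!t'. t' \<in> {t..<t+1} \<and>
               \<gamma> t' \<in> {(real_of_int j, 0) | j::int. True}))"
proof (intro conjI allI impI)
  fix k :: nat and \<gamma> and t :: real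
  assume "2 \<le> k" and \<gamma>: "global_traj (Xk k) (Yk k) \<gamma> \<and> \<gamma> 0 \<in> Lambdak k"
  interpret graph_cycle "Pk k" "deriv (Pk k)" "real k / 2"
    using \<open>2 \<le> k\<close> by (rule graph_cycle_Pk)
  show "\<exists>!t'. t' \<in> {t..<t+1} \<and> \<gamma> t' \<in> {(pj k j, 0) | j. 1 \<le> j \<and> j \<le> k - 1}"
    using \<gamma> Pk_target[OF \<open>2 \<le> k\<close>]
    by (intro global_traj_unique_hit) (auto simp: Xk_eq Yk_eq Lambdak_eq[OF \<open>2 \<le> k\<close>])
next
  fix \<gamma> and t :: real
  assume \<gamma>: "global_traj Xinf Yinf \<gamma> \<and> \<gamma> 0 \<in> Lambdainf"
  interpret graph_cycle Pinf "\<lambda>x. 2 * sin (2 * pi * x)" 0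
    by (rule graph_cycle_Pinf)
  show "\<exists>!t'. t' \<in> {t..<t+1} \<and> \<gamma> t' \<in> {(real_of_int j, 0) | j::int. True}"
    using \<gamma> Pinf_target
    by (intro global_traj_unique_hit) (auto simp: Xinf_eq Yinf_eq Lambdainf_eq)
qed

end
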